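(* Let $n\ge1$, $\mathbf{A}=\{a_1,\dots,a_n\}$, and let $\mathbf{S}_2^n=\{XY : X,Y\in\mathbf{A}^*\setminus\{\emptyset\},\ \overline{\nu}(X)=\overline{\nu}(Y)\}$. Then no minimal crucial word with respect to $\mathbf{S}_2^n$ contains three distinct letters each of which occurs exactly twice in the word.
   Context: A word over $\mathbf{A}$ is a finite sequence of letters; $\mathbf{A}^*$ is the set of all words. A subword is a block of consecutive letters. For a word $X$, the content vector is $\overline{\nu}(X)=(\nu_1(X),\dots,\nu_n(X))$, where $\nu_i(X)$ is the number of occurrences of $a_i$ in $X$. For $\mathbf{S}\subseteq\mathbf{A}^*$, a word is free from $\mathbf{S}$ if none of its subwords belongs to $\mathbf{S}$. A word $X$ free from $\mathbf{S}$ is crucial with respect to $\mathbf{S}$ if for every letter $a\in\mathbf{A}$ the word $Xa$ contains a subword belonging to $\mathbf{S}$. A minimal crucial word is a crucial word of smallest possible length. *)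

theory Defs
  imports Main
begin

text \<open>Alphabet A = {a_1,...,a_n}, letter a_i represented by the natural number i.\<close>
definition alphabet :: "nat \<Rightarrow> nat set" where
  "alphabet n = {1..n}"

definition words :: "nat \<Rightarrow> nat list set" where
  "words n = {w. set w \<subseteq> alphabet n}"

definition nu :: "nat \<Rightarrow> nat list \<Rightarrow> nat" where
  "nu i X = count_list X i"

definition content :: "nat \<Rightarrow> nat list \<Rightarrow> nat list" where
  "content n X = map (\<lambda>i. nu i X) [1..<n+1]"

definition S2 :: "nat \<Rightarrow> nat list set" where
  "S2 n = {X @ Y | X Y. X \<in> words n \<and> Y \<in> words n \<and> X \<noteq> [] \<and> Y \<noteq> []
                        \<and> content n X = content n Y}"

definition subword :: "'a list \<Rightarrow> 'a list \<Rightarrow> bool" where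
  "subword u w \<longleftrightarrow> (\<exists>p q. w = p @ u @ q)"

definition free_from :: "'a list set \<Rightarrow> 'a list \<Rightarrow> bool" where
  "free_from S w \<longleftrightarrow> (\<forall>u. subword u w \<longrightarrow> u \<notin> S)"

definition crucial :: "'a set \<Rightarrow> 'a list set \<Rightarrow> 'a list \<Rightarrow> bool" where
  "crucial A S w \<longleftrightarrow> set w \<subseteq> A \<and> free_from S w \<and>
     (\<forall>a\<in>A. \<exists>u. subword u (w @ [a]) \<and> u \<in> S)"

definition minimal_crucial :: "'a set \<Rightarrow> 'a list set \<Rightarrow> 'a list \<Rightarrow> bool" where
  "minimal_crucial A S w \<longleftrightarrow> crucial A S w \<and>
     (\<forall>v. crucial A S v \<longrightarrow> length w \<le> length v)"

end

theory Submission
  imports Defs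
begin

text \<open>
  Read a crucial word \<open>W\<close> backwards: \<open>R = rev W\<close> contains no abelian square, and for every
  letter \<open>x\<close> the word \<open>x # R\<close> begins with an abelian square, of half-length \<open>k x\<close> say.
  Let \<open>M\<close> be the largest of these lengths, attained at \<open>z\<close>. The square completed by \<open>z\<close>
  shows that every other letter occurs in the first \<open>2M - 1\<close> letters of \<open>R\<close> an even, positive
  number of times, half of them among the first \<open>M - 1\<close>. A letter occurring only twice in
  \<open>W\<close> thus occurs once in each half, and comparing the completion lengths shows that at most
  two letters besides \<open>z\<close> can do so. Hence if three letters occur exactly twice, one of them is
  \<open>z\<close> and each of the remaining \<open>n - 3\<close> letters occurs at least four times, so
  \<open>|W| \<ge> 4n - 6\<close>. But for every \<open>n \<ge> 3\<close> there is a crucial word of length \<open>4n - 7\<close>: an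
  explicit one for \<open>n \<le> 5\<close>, and a uniform family for \<open>n \<ge> 6\<close>.
\<close>

section \<open>Abelian squares and crucial words\<close>

definition abelian_square_prefix :: "'a list \<Rightarrow> nat \<Rightarrow> bool" where
  "abelian_square_prefix w k \<longleftrightarrow>
     0 < k \<and> 2 * k \<le> length w \<and> count_list (take k w) = count_list (take k (drop k w))"

lemma abelian_square_prefix_code:
  "abelian_square_prefix w k \<longleftrightarrow> 0 < k \<and> 2 * k \<le> length w \<and>
     (\<forall>b\<in>set w. count_list (take k w) b = count_list (take k (drop k w)) b)"
proof -
  have "count_list (take k w) b = count_list (take k (drop k w)) b" if "b \<notin> set w" for b
    using that by (metis count_notin in_set_dropD in_set_takeD)
  then show ?thesis
    unfolding abelian_square_prefix_def by (auto simp: fun_eq_iff)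
qed

lemma abelian_square_prefix_take:
  "abelian_square_prefix (take (2 * k) w) k \<longleftrightarrow> abelian_square_prefix w k"
  by (auto simp: abelian_square_prefix_def take_drop min_def mult_2)

lemma abelian_square_prefix_rev:
  assumes "length u = 2 * k"
  shows "abelian_square_prefix (rev u) k \<longleftrightarrow> abelian_square_prefix u k"
proof -
  have "take k (rev u) = rev (take k (drop k u))" and "take k (drop k (rev u)) = rev (take k u)"
    using assms by (simp_all add: take_rev drop_rev)
  then show ?thesis
    using assms by (auto simp: abelian_square_prefix_def count_list_rev fun_eq_iff)
qed

lemma count_list_eq_imp_length_eq:
  assumes "count_list X = count_list Y"
  shows "length X = length Y"
proof -
  have "length X = sum (count_list X) (set X \<union> set Y)"
    by (simp add: sum_count_set)
  also have "\<dots> = length Y"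
    using assms by (simp add: sum_count_set)
  finally show ?thesis .
qed

lemma content_eq_iff_count_list_eq:
  assumes "set X \<subseteq> alphabet n" and "set Y \<subseteq> alphabet n"
  shows "content n X = content n Y \<longleftrightarrow> count_list X = count_list Y"
proof
  assume eq: "content n X = content n Y"
  show "count_list X = count_list Y"
  proof
    fix b
    show "count_list X b = count_list Y b"
    proof (cases "b \<in> alphabet n")
      case True
      then have "b \<in> set [1..<n+1]" by (auto simp: alphabet_def)
      with eq show ?thesis by (auto simp: content_def nu_def map_eq_conv)
    next
      case False
      with assms have "b \<notin> set X" "b \<notin> set Y" by auto
      then show ?thesis by simp
    qed
  qed
qed (simp add: content_def nu_def)

lemma S2_iff:
  "u \<in> S2 n \<longleftrightarrow> set u \<subseteq> alphabet n \<and> (\<exists>k. length u = 2 * k \<and> abelian_square_prefix u k)"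
proof
  assume "u \<in> S2 n"
  then obtain X Y where u: "u = X @ Y" "X \<noteq> []" "set X \<subseteq> alphabet n" "set Y \<subseteq> alphabet n"
    and eq: "content n X = content n Y" by (auto simp: S2_def words_def)
  have counts: "count_list X = count_list Y"
    using eq u(3,4) content_eq_iff_count_list_eq by blast
  then have len: "length X = length Y" by (rule count_list_eq_imp_length_eq)
  have "abelian_square_prefix u (length X)"
    using u(1,2) counts len by (auto simp: abelian_square_prefix_def)
  moreover have "length u = 2 * length X"
    using u(1) len by simp
  ultimately show "set u \<subseteq> alphabet n \<and> (\<exists>k. length u = 2 * k \<and> abelian_square_prefix u k)"
    using u(1,3,4) by (intro conjI exI[of _ "length X"]) auto
next
  assume "set u \<subseteq> alphabet n \<and> (\<exists>k. length u = 2 * k \<and> abelian_square_prefix u k)"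
  then obtain k where u: "set u \<subseteq> alphabet n" "length u = 2 * k" "abelian_square_prefix u k"
    by blast
  define X Y where "X = take k u" and "Y = drop k u"
  have "X \<in> words n" "Y \<in> words n"
    using u(1) by (auto simp: words_def X_def Y_def dest: in_set_takeD in_set_dropD)
  moreover have "content n X = content n Y"
    using u(2,3) calculation
    by (auto simp: abelian_square_prefix_def X_def Y_def words_def content_eq_iff_count_list_eq)
  moreover have "X \<noteq> []" "Y \<noteq> []"
    using u(2,3) by (auto simp: abelian_square_prefix_def X_def Y_def)
  moreover have "u = X @ Y"
    by (simp add: X_def Y_def)
  ultimately show "u \<in> S2 n"
    unfolding S2_def by blast
qed

lemma S2_subword_rev_iff:
  assumes "set R \<subseteq> alphabet n"
  shows "(\<exists>u. subword u (rev R) \<and> u \<in> S2 n) \<longleftrightarrow> (\<exists>s k. abelian_square_prefix (drop s R) k)"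
proof
  assume "\<exists>u. subword u (rev R) \<and> u \<in> S2 n"
  then obtain u p q k where R: "R = p @ rev u @ q" and len: "length u = 2 * k"
    and sq: "abelian_square_prefix u k"
    by (auto simp: subword_def S2_iff) (metis rev_append rev_rev_ident append_assoc)
  have "take (2 * k) (drop (length p) R) = rev u"
    using R len by simp
  then show "\<exists>s k. abelian_square_prefix (drop s R) k"
    using sq len abelian_square_prefix_rev abelian_square_prefix_take by metis
next
  assume "\<exists>s k. abelian_square_prefix (drop s R) k"
  then obtain s k where sq: "abelian_square_prefix (drop s R) k" by blast
  define v where "v = take (2 * k) (drop s R)"
  have len: "length v = 2 * k"
    using sq by (auto simp: v_def abelian_square_prefix_def)
  have "R = take s R @ v @ drop (2 * k) (drop s R)"
    unfolding v_def by (metis append_take_drop_id)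
  then have "subword (rev v) (rev R)"
    unfolding subword_def by (metis rev_append append_assoc)
  moreover have "set (rev v) \<subseteq> alphabet n"
    using assms by (auto simp: v_def dest: in_set_takeD in_set_dropD)
  moreover have "abelian_square_prefix (rev v) k"
    using sq len by (simp add: abelian_square_prefix_rev abelian_square_prefix_take v_def)
  ultimately show "\<exists>u. subword u (rev R) \<and> u \<in> S2 n"
    using len unfolding S2_iff by (metis length_rev)
qed

lemma crucial_S2_rev_iff:
  "crucial (alphabet n) (S2 n) (rev R) \<longleftrightarrow> set R \<subseteq> alphabet n \<and>
     (\<forall>s k. \<not> abelian_square_prefix (drop s R) k) \<and>
     (\<forall>a\<in>alphabet n. \<exists>k. abelian_square_prefix (a # R) k)"
proof (cases "set R \<subseteq> alphabet n")
  case True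
  have free: "free_from (S2 n) (rev R) \<longleftrightarrow> (\<forall>s k. \<not> abelian_square_prefix (drop s R) k)"
    using S2_subword_rev_iff[OF True] by (auto simp: free_from_def)
  have "(\<exists>u. subword u (rev R @ [a]) \<and> u \<in> S2 n) \<longleftrightarrow>
      (\<exists>s k. abelian_square_prefix (drop s (a # R)) k)" if "a \<in> alphabet n" for a
    using S2_subword_rev_iff[of "a # R" n] True that by simp
  moreover have "(\<exists>s k. abelian_square_prefix (drop s (a # R)) k) \<longleftrightarrow>
      (\<exists>k. abelian_square_prefix (a # R) k)"
    if "\<forall>s k. \<not> abelian_square_prefix (drop s R) k" for a
    using that by (metis drop0 drop_Suc_Cons not0_implies_Suc)
  ultimately show ?thesis
    unfolding crucial_def using True free by auto
qed (simp add: crucial_def)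

lemma crucial_S2_rev_iff_bounded:
  "crucial (alphabet n) (S2 n) (rev R) \<longleftrightarrow> list_all (\<lambda>a. 1 \<le> a \<and> a \<le> n) R \<and>
     list_all (\<lambda>s. list_all (\<lambda>k. \<not> abelian_square_prefix (drop s R) k) [1..<length R + 1])
       [0..<length R] \<and>
     list_all (\<lambda>a. list_ex (abelian_square_prefix (a # R)) [1..<length R + 2]) [1..<n + 1]"
proof -
  have bounded: "1 \<le> k \<and> k \<le> length w" if "abelian_square_prefix w k" for w :: "'a list" and k
    using that by (auto simp: abelian_square_prefix_def)
  have "list_all (\<lambda>a. 1 \<le> a \<and> a \<le> n) R \<longleftrightarrow> set R \<subseteq> alphabet n"
    by (auto simp: list_all_iff alphabet_def)
  moreover have "list_all (\<lambda>s. list_all (\<lambda>k. \<not> abelian_square_prefix (drop s R) k) [1..<length R + 1])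
      [0..<length R] \<longleftrightarrow> (\<forall>s k. \<not> abelian_square_prefix (drop s R) k)"
  proof -
    have "abelian_square_prefix (drop s R) k \<Longrightarrow> s \<in> set [0..<length R] \<and> k \<in> set [1..<length R + 1]"
      for s k using bounded[of "drop s R" k] by auto
    then show ?thesis
      unfolding list_all_iff by blast
  qed
  moreover have "list_all (\<lambda>a. list_ex (abelian_square_prefix (a # R)) [1..<length R + 2]) [1..<n + 1]
      \<longleftrightarrow> (\<forall>a\<in>alphabet n. \<exists>k. abelian_square_prefix (a # R) k)"
  proof -
    have "abelian_square_prefix (a # R) k \<Longrightarrow> k \<in> set [1..<length R + 2]" for a k
      using bounded[of "a # R" k] by auto
    moreover have "set [1..<n + 1] = alphabet n"
      by (auto simp: alphabet_def)
    ultimately show ?thesis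
      unfolding list_all_iff list_ex_iff by blast
  qed
  ultimately show ?thesis
    unfolding crucial_S2_rev_iff by simp
qed

section \<open>A lower bound on the length\<close>

lemma count_list_take_mono:
  assumes "s \<le> t"
  shows "count_list (take s xs) b \<le> count_list (take t xs) b"
proof -
  have "take t xs = take s xs @ take (t - s) (drop s xs)"
    using assms by (metis le_add_diff_inverse take_add)
  then show ?thesis by (metis count_list_append le_add1)
qed

lemma count_list_take_le: "count_list (take t xs) b \<le> count_list xs b"
  by (metis append_take_drop_id count_list_append le_add1)

lemma sum_count_list_le_length:
  assumes "finite A"
  shows "sum (count_list xs) A \<le> length xs"
proof -
  have "sum (count_list xs) A \<le> sum (count_list xs) (A \<union> set xs)"
    using assms by (intro sum_mono2) auto
  also have "\<dots> = length xs"
    using assms by (intro sum_count_set) auto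
  finally show ?thesis .
qed

text \<open>\<open>R\<close> plays the role of the reversal of a crucial word, and \<open>k x\<close> is the half-length of
  the abelian square with which \<open>x # R\<close> begins.\<close>

locale square_completions =
  fixes A :: "'a set" and R :: "'a list" and k :: "'a \<Rightarrow> nat"
  assumes completes: "x \<in> A \<Longrightarrow> abelian_square_prefix (x # R) (k x)"
begin

definition prefix_count :: "'a \<Rightarrow> nat \<Rightarrow> nat" where
  "prefix_count b t = count_list (take t R) b"

lemma prefix_count_mono: "s \<le> t \<Longrightarrow> prefix_count b s \<le> prefix_count b t"
  unfolding prefix_count_def by (rule count_list_take_mono)

lemma k_pos: "x \<in> A \<Longrightarrow> 0 < k x"
  using completes by (simp add: abelian_square_prefix_def)

lemma completion_count:
  assumes "x \<in> A"
  shows "(if b = x then 1 else 0) + 2 * prefix_count b (k x - 1) = prefix_count b (2 * k x - 1)"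
proof -
  define j where "j = k x - 1"
  have k: "k x = Suc j" using k_pos[OF assms] by (simp add: j_def)
  have "count_list (x # take j R) b = count_list (take (Suc j) (drop j R)) b"
    using completes[OF assms] by (simp add: abelian_square_prefix_def k)
  moreover have "take (2 * k x - 1) R = take j R @ take (Suc j) (drop j R)"
    using take_add[of j "Suc j" R] by (simp add: k mult_2)
  ultimately show ?thesis
    unfolding prefix_count_def j_def[symmetric] by (auto split: if_splits)
qed

lemma completion_count_self:
  "x \<in> A \<Longrightarrow> 1 + 2 * prefix_count x (k x - 1) = prefix_count x (2 * k x - 1)"
  using completion_count[of x x] by simp

lemma completion_count_other:
  "x \<in> A \<Longrightarrow> b \<noteq> x \<Longrightarrow> 2 * prefix_count b (k x - 1) = prefix_count b (2 * k x - 1)"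
  using completion_count[of x b] by simp

lemma inj_on_k: "inj_on k A"
  by (rule inj_onI) (metis completion_count_self completion_count_other odd_add even_mult_iff odd_one even_add)

text \<open>The square completed by \<open>y2\<close> contains both occurrences of \<open>y1\<close>, so it reaches beyond
  position \<open>M - 1\<close>, but no occurrence of \<open>y3\<close>, so it does not.\<close>

lemma no_completion_between:
  assumes "y1 \<in> A" "y2 \<in> A" "y3 \<in> A"
    and "k y1 < k y2" "k y2 < k y3" "k y3 \<le> M"
    and "prefix_count y1 (M - 1) = 1"
    and "prefix_count y3 (M - 1) = 1" "prefix_count y3 (2 * M - 1) = 2"
  shows False
proof -
  have "y2 \<noteq> y1" "y2 \<noteq> y3" using assms(4,5) by auto
  have y1: "2 * prefix_count y1 (k y2 - 1) = prefix_count y1 (2 * k y2 - 1)"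
    using completion_count_other assms(2) \<open>y2 \<noteq> y1\<close> by auto
  have y3: "2 * prefix_count y3 (k y2 - 1) = prefix_count y3 (2 * k y2 - 1)"
    using completion_count_other assms(2) \<open>y2 \<noteq> y3\<close> by auto
  have "1 \<le> prefix_count y1 (2 * k y1 - 1)"
    using completion_count_self[OF assms(1)] by linarith
  also have "\<dots> \<le> prefix_count y1 (2 * k y2 - 1)"
    using assms(4) by (intro prefix_count_mono) simp
  finally have "1 \<le> prefix_count y1 (k y2 - 1)"
    using y1 by linarith
  moreover have "prefix_count y1 (k y2 - 1) \<le> prefix_count y1 (M - 1)"
    using assms(5,6) by (intro prefix_count_mono) simp
  ultimately have "prefix_count y1 (2 * k y2 - 1) = 2"
    using y1 assms(7) by linarith
  then have "M - 1 < 2 * k y2 - 1"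
    using prefix_count_mono[of "2 * k y2 - 1" "M - 1" y1] assms(7) by linarith
  have "prefix_count y3 (2 * k y3 - 1) \<le> prefix_count y3 (2 * M - 1)"
    using assms(6) by (intro prefix_count_mono) simp
  then have "prefix_count y3 (k y3 - 1) = 0"
    using completion_count_self[OF assms(3)] assms(9) by linarith
  moreover have "prefix_count y3 (k y2 - 1) \<le> prefix_count y3 (k y3 - 1)"
    using assms(5) by (intro prefix_count_mono) simp
  ultimately have "prefix_count y3 (2 * k y2 - 1) = 0"
    using y3 by simp
  moreover have "prefix_count y3 (M - 1) \<le> prefix_count y3 (2 * k y2 - 1)"
    using \<open>M - 1 < 2 * k y2 - 1\<close> by (intro prefix_count_mono) simp
  ultimately show False
    using assms(8) by simp
qed

lemma no_three_split_letters:
  assumes "y1 \<in> A" "y2 \<in> A" "y3 \<in> A" "y1 \<noteq> y2" "y1 \<noteq> y3" "y2 \<noteq> y3"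
    and split: "\<And>y. y \<in> {y1, y2, y3} \<Longrightarrow>
      k y \<le> M \<and> prefix_count y (M - 1) = 1 \<and> prefix_count y (2 * M - 1) = 2"
  shows False
proof -
  have between: False if "u \<in> {y1, y2, y3}" "v \<in> {y1, y2, y3}" "w \<in> {y1, y2, y3}"
    and "k u < k v" "k v < k w" for u v w
    using no_completion_between[of u v w M] that split[of u] split[of w] assms(1-3) by blast
  have "k y1 \<noteq> k y2" "k y1 \<noteq> k y3" "k y2 \<noteq> k y3"
    using inj_on_k assms(1-6) by (auto dest: inj_onD)
  then show False
    using between[of y1 y2 y3] between[of y1 y3 y2] between[of y2 y1 y3]
      between[of y2 y3 y1] between[of y3 y1 y2] between[of y3 y2 y1]
    by (meson insertI1 insertI2 linorder_neqE_nat)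
qed

theorem length_lower_bound:
  assumes "finite A"
    and abc: "a \<in> A" "b \<in> A" "c \<in> A" "a \<noteq> b" "a \<noteq> c" "b \<noteq> c"
    and twice: "count_list R a = 2" "count_list R b = 2" "count_list R c = 2"
  shows "4 * card A \<le> length R + 6"
proof -
  define M where "M = Max (k ` A)"
  have k_le_M: "k x \<le> M" if "x \<in> A" for x
    using assms(1) that by (simp add: M_def)
  have "M \<in> k ` A"
    unfolding M_def using assms(1,2) by (intro Max_in) auto
  then obtain z where z: "z \<in> A" "k z = M" by auto
  have doubled: "2 * prefix_count y (M - 1) = prefix_count y (2 * M - 1)"
    if "y \<in> A" "y \<noteq> z" for y
    using completion_count_other[OF z(1)] that z(2) by simp
  have present: "1 \<le> prefix_count y (M - 1)" if "y \<in> A" "y \<noteq> z" for y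
  proof -
    have "1 \<le> prefix_count y (2 * k y - 1)"
      using completion_count_self[OF that(1)] by linarith
    also have "\<dots> \<le> prefix_count y (2 * M - 1)"
      using k_le_M[OF that(1)] by (intro prefix_count_mono) simp
    finally show ?thesis
      using doubled[OF that] by linarith
  qed
  have bounded: "prefix_count y t \<le> count_list R y" for y t
    unfolding prefix_count_def by (rule count_list_take_le)
  have split: "k y \<le> M \<and> prefix_count y (M - 1) = 1 \<and> prefix_count y (2 * M - 1) = 2"
    if "y \<in> A" "y \<noteq> z" "count_list R y = 2" for y
    using doubled[OF that(1,2)] present[OF that(1,2)] k_le_M[OF that(1)]
      bounded[of y "2 * M - 1"] that(3) by linarith
  have abc_sub: "{a, b, c} \<subseteq> A" using abc by auto
  have z_abc: "z \<in> {a, b, c}"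
    using no_three_split_letters[OF abc] split abc twice by blast
  then obtain p q where pq: "{a, b, c} = {p, q, z}" "p \<noteq> q" "p \<noteq> z" "q \<noteq> z"
    using abc by auto
  have split_pq: "k y \<le> M \<and> prefix_count y (M - 1) = 1 \<and> prefix_count y (2 * M - 1) = 2"
    if "y \<in> {p, q}" for y
    using split[of y] that pq abc twice by (metis insertCI insertE singletonD)
  have four: "4 \<le> count_list R y" if "y \<in> A - {a, b, c}" for y
  proof -
    have y: "y \<in> A" "y \<noteq> z" using that z_abc by auto
    have "prefix_count y (M - 1) \<noteq> 1"
    proof
      assume "prefix_count y (M - 1) = 1"
      then have "k y \<le> M \<and> prefix_count y (M - 1) = 1 \<and> prefix_count y (2 * M - 1) = 2"
        using doubled[OF y] k_le_M[OF y(1)] by simp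
      then show False
        using no_three_split_letters[of p q y M] split_pq pq that abc_sub by auto
    qed
    then have "4 \<le> prefix_count y (2 * M - 1)"
      using doubled[OF y] present[OF y] by linarith
    then show ?thesis
      using bounded[of y "2 * M - 1"] by linarith
  qed
  have "6 + 4 * card (A - {a, b, c}) = sum (count_list R) {a, b, c} + sum (\<lambda>_. 4) (A - {a, b, c})"
    using abc twice by simp
  also have "\<dots> \<le> sum (count_list R) {a, b, c} + sum (count_list R) (A - {a, b, c})"
    using four by (intro add_left_mono sum_mono) auto
  also have "\<dots> = sum (count_list R) A"
    by (metis add.commute sum.subset_diff[OF abc_sub assms(1)])
  also have "\<dots> \<le> length R"
    using assms(1) by (rule sum_count_list_le_length)
  finally show ?thesis
    using card_Diff_subset[OF _ abc_sub] card_mono[OF assms(1) abc_sub] abc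
    by (simp add: finite_subset[OF abc_sub assms(1)])
qed

end

lemma crucial_S2_length_lower_bound:
  assumes crucial: "crucial (alphabet n) (S2 n) W"
    and abc: "a \<in> alphabet n" "b \<in> alphabet n" "c \<in> alphabet n" "a \<noteq> b" "a \<noteq> c" "b \<noteq> c"
    and twice: "count_list W a = 2" "count_list W b = 2" "count_list W c = 2"
  shows "4 * n \<le> length W + 6"
proof -
  have "\<forall>x\<in>alphabet n. \<exists>k. abelian_square_prefix (x # rev W) k"
    using crucial crucial_S2_rev_iff[of n "rev W"] by simp
  then obtain k where "\<And>x. x \<in> alphabet n \<Longrightarrow> abelian_square_prefix (x # rev W) (k x)"
    by metis
  then interpret square_completions "alphabet n" "rev W" k
    by unfold_locales
  have "4 * card (alphabet n) \<le> length (rev W) + 6"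
    using length_lower_bound[OF _ abc] twice by (simp add: alphabet_def count_list_rev)
  then show ?thesis
    by (simp add: alphabet_def)
qed

section \<open>Crucial words of length \<open>4n - 7\<close>\<close>

text \<open>For \<open>m \<ge> 2\<close> the word \<open>short_crucial_rev m\<close> over the letters \<open>1..m+4\<close> is
  \<open>1 2 1 3 2 | 4 5 \<dots> (m+3) | 4 \<dots> (m+2) | 1 2 1 3 2 4 (m+3) | 5 4 6 5 \<dots> (m+2) (m+1) | (m+4) (m+2)\<close>;
  its reversal is crucial. The letter \<open>m + 4\<close> occurs once, \<open>3\<close> and \<open>m + 3\<close> twice, all
  others four times.\<close>

definition letter_at :: "nat \<Rightarrow> nat \<Rightarrow> nat" where
  "letter_at m t =
    (if t = 0 \<or> t = 2 then 1 else if t = 1 \<or> t = 4 then 2 else if t = 3 then 3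
     else if t < m + 5 then t - 1
     else if t < 2 * m + 4 then t - 1 - m
     else if t = 2 * m + 4 \<or> t = 2 * m + 6 then 1
     else if t = 2 * m + 5 \<or> t = 2 * m + 8 then 2
     else if t = 2 * m + 7 then 3
     else if t = 2 * m + 9 then 4
     else if t = 2 * m + 10 then m + 3
     else if t = 4 * m + 7 then m + 4
     else if odd t then (t - 2 * m - 1) div 2
     else (t - 2 * m - 4) div 2)"

definition short_crucial_rev :: "nat \<Rightarrow> nat list" where
  "short_crucial_rev m = map (letter_at m) [0..<4 * m + 9]"

definition positions :: "nat \<Rightarrow> nat \<Rightarrow> nat list" where
  "positions m a =
    (if a = 1 then [0, 2, 2 * m + 4, 2 * m + 6]
     else if a = 2 then [1, 4, 2 * m + 5, 2 * m + 8]
     else if a = 3 then [3, 2 * m + 7]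
     else if a = m + 4 then [4 * m + 7]
     else if a = m + 3 then [m + 4, 2 * m + 10]
     else if 4 \<le> a \<and> a \<le> m + 2 then [a + 1, a + 1 + m, 2 * m + 1 + 2 * a, 2 * m + 4 + 2 * a]
     else [])"

definition window_count :: "nat \<Rightarrow> nat \<Rightarrow> nat \<Rightarrow> nat \<Rightarrow> nat" where
  "window_count m a s l = length (filter (\<lambda>p. s \<le> p \<and> p < s + l) (positions m a))"

lemma positions_simps:
  "positions m 1 = [0, 2, 2 * m + 4, 2 * m + 6]"
  "positions m 2 = [1, 4, 2 * m + 5, 2 * m + 8]"
  "positions m 3 = [3, 2 * m + 7]"
  "positions m (m + 4) = [4 * m + 7]"
  "m \<ge> 2 \<Longrightarrow> positions m (m + 3) = [m + 4, 2 * m + 10]"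
  "4 \<le> a \<Longrightarrow> a \<le> m + 2 \<Longrightarrow>
     positions m a = [a + 1, a + 1 + m, 2 * m + 1 + 2 * a, 2 * m + 4 + 2 * a]"
  by (auto simp: positions_def)

lemma positions_cases:
  assumes "m \<ge> 2"
  obtains "positions m b = [0, 2, 2 * m + 4, 2 * m + 6]" "b = 1"
  | "positions m b = [1, 4, 2 * m + 5, 2 * m + 8]" "b = 2"
  | "positions m b = [3, 2 * m + 7]" "b = 3"
  | "positions m b = [m + 4, 2 * m + 10]" "b = m + 3"
  | "positions m b = [4 * m + 7]" "b = m + 4"
  | "positions m b = [b + 1, b + 1 + m, 2 * m + 1 + 2 * b, 2 * m + 4 + 2 * b]"
      "4 \<le> b" "b \<le> m + 2"
  | "positions m b = []" "b = 0 \<or> m + 4 < b"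
proof -
  consider "b = 1" | "b = 2" | "b = 3" | "b = m + 3" | "b = m + 4" | "4 \<le> b \<and> b \<le> m + 2"
    | "b = 0 \<or> m + 4 < b"
    by linarith
  then show thesis
    using that assms by cases (auto simp: positions_def)
qed

lemma letter_at_middle:
  assumes "m \<ge> 2" "4 \<le> a" "a \<le> m + 2"
  shows "letter_at m (a + 1) = a" "letter_at m (a + 1 + m) = a"
    "letter_at m (2 * m + 1 + 2 * a) = a" "letter_at m (2 * m + 4 + 2 * a) = a"
proof -
  show "letter_at m (a + 1) = a" "letter_at m (a + 1 + m) = a"
    using assms by (simp_all add: letter_at_def)
  show "letter_at m (2 * m + 1 + 2 * a) = a"
  proof (cases "a = 4")
    case False
    then have "2 * m + 1 + 2 * a \<noteq> 4 * m + 7" "2 * m + 1 + 2 * a \<noteq> 2 * m + 9"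
      using assms by linarith+
    then show ?thesis
      using assms by (simp add: letter_at_def)
  qed (simp add: letter_at_def)
  have "2 * m + 4 + 2 * a \<noteq> 4 * m + 7"
    by presburger
  then show "letter_at m (2 * m + 4 + 2 * a) = a"
    using assms by (simp add: letter_at_def)
qed

lemma letter_at_simps:
  assumes "m \<ge> 2"
  shows "letter_at m 0 = 1" "letter_at m 2 = 1"
    "letter_at m (2 * m + 4) = 1" "letter_at m (2 * m + 6) = 1"
    "letter_at m 1 = 2" "letter_at m 4 = 2"
    "letter_at m (2 * m + 5) = 2" "letter_at m (2 * m + 8) = 2"
    "letter_at m 3 = 3" "letter_at m (2 * m + 7) = 3"
    "letter_at m (m + 4) = m + 3" "letter_at m (2 * m + 10) = m + 3"
    "letter_at m (4 * m + 7) = m + 4" "letter_at m (2 * m + 9) = 4"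
  using assms by (simp_all add: letter_at_def)

lemma letter_at_positions:
  assumes m: "m \<ge> 2" and t: "t \<in> set (positions m a)"
  shows "letter_at m t = a"
proof (cases rule: positions_cases[OF m, of a])
  case 6
  then show ?thesis using t letter_at_middle[OF m] by auto
qed (use t m in \<open>auto simp: letter_at_simps simp del: One_nat_def\<close>)

lemma positions_letter_at:
  assumes m: "m \<ge> 2" and t: "t < 4 * m + 9"
  shows "t \<in> set (positions m (letter_at m t))"
proof -
  have small: "t \<in> set (positions m (letter_at m t))"
    if "t \<in> {0, 1, 2, 3, 4, m + 4, 2 * m + 4, 2 * m + 5, 2 * m + 6, 2 * m + 7, 2 * m + 8,
      2 * m + 9, 2 * m + 10, 4 * m + 7}"
    using that m by (auto simp: letter_at_simps positions_simps simp del: One_nat_def)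
  consider "t \<le> 4 \<or> t = m + 4 \<or> (2 * m + 4 \<le> t \<and> t \<le> 2 * m + 10) \<or> t = 4 * m + 7"
    | "5 \<le> t" "t < m + 4" | "m + 5 \<le> t" "t < 2 * m + 4"
    | a where "t = 2 * m + 1 + 2 * a" "5 \<le> a" "a \<le> m + 2"
    | a where "t = 2 * m + 4 + 2 * a" "4 \<le> a" "a \<le> m + 2"
  proof -
    consider "t \<le> 4 \<or> t = m + 4 \<or> (2 * m + 4 \<le> t \<and> t \<le> 2 * m + 10) \<or> t = 4 * m + 7"
      | "5 \<le> t" "t < m + 4" | "m + 5 \<le> t" "t < 2 * m + 4"
      | "2 * m + 11 \<le> t" "t \<noteq> 4 * m + 7"
      by linarith
    then show thesis
    proof cases
      case 4
      then have "(\<exists>a. t = 2 * m + 1 + 2 * a \<and> 5 \<le> a \<and> a \<le> m + 2) \<or>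
          (\<exists>a. t = 2 * m + 4 + 2 * a \<and> 4 \<le> a \<and> a \<le> m + 2)"
        using t by presburger
      then show thesis
        using that(4,5) by blast
    qed (use that in blast)+
  qed
  then show ?thesis
  proof cases
    case 1
    then show ?thesis by (intro small) auto
  next
    case 2
    then have "letter_at m t = t - 1" by (simp add: letter_at_def)
    then show ?thesis using 2 by (simp add: positions_simps)
  next
    case 3
    then have "letter_at m t = t - 1 - m" by (simp add: letter_at_def)
    then show ?thesis using 3 by (simp add: positions_simps)
  next
    case (4 a)
    then show ?thesis using letter_at_middle[OF m] by (simp add: positions_simps)
  next
    case (5 a)
    then show ?thesis using letter_at_middle[OF m] by (simp add: positions_simps)
  qed
qed

lemma length_short_crucial_rev: "length (short_crucial_rev m) = 4 * m + 9"
  by (simp add: short_crucial_rev_def)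

lemma set_short_crucial_rev:
  assumes "m \<ge> 2"
  shows "set (short_crucial_rev m) \<subseteq> alphabet (m + 4)"
proof
  fix a assume "a \<in> set (short_crucial_rev m)"
  then obtain t where "t < 4 * m + 9" "a = letter_at m t"
    by (auto simp: short_crucial_rev_def)
  then have "positions m a \<noteq> []"
    using positions_letter_at[OF assms] by fastforce
  then show "a \<in> alphabet (m + 4)"
    by (auto simp: alphabet_def positions_def split: if_splits)
qed

lemma distinct_positions: "m \<ge> 1 \<Longrightarrow> distinct (positions m a)"
  by (simp add: positions_def)

lemma count_list_window:
  assumes m: "m \<ge> 2" and "s + l \<le> 4 * m + 9"
  shows "count_list (take l (drop s (short_crucial_rev m))) a = window_count m a s l"
proof -
  have "take l (drop s (short_crucial_rev m)) = map (letter_at m) [s..<s + l]"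
    using assms(2) by (simp add: short_crucial_rev_def drop_map take_map)
  then have "count_list (take l (drop s (short_crucial_rev m))) a
      = length (filter (\<lambda>t. a = letter_at m t) [s..<s + l])"
    by (simp add: count_list_eq_length_filter filter_map o_def)
  also have "\<dots> = card ({t. a = letter_at m t} \<inter> {s..<s + l})"
    by (simp add: distinct_length_filter)
  also have "{t. a = letter_at m t} \<inter> {s..<s + l} = {t. s \<le> t \<and> t < s + l} \<inter> set (positions m a)"
  proof (intro set_eqI iffI)
    fix t assume "t \<in> {t. a = letter_at m t} \<inter> {s..<s + l}"
    then show "t \<in> {t. s \<le> t \<and> t < s + l} \<inter> set (positions m a)"
      using positions_letter_at[OF m, of t] assms(2) by auto
  next
    fix t assume "t \<in> {t. s \<le> t \<and> t < s + l} \<inter> set (positions m a)"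
    then show "t \<in> {t. a = letter_at m t} \<inter> {s..<s + l}"
      using letter_at_positions[OF m, of t a] by auto
  qed
  also have "card \<dots> = window_count m a s l"
    unfolding window_count_def using m
    by (simp add: distinct_length_filter distinct_positions)
  finally show ?thesis .
qed

lemma window_square_free_first_block:
  assumes m: "m \<ge> 2" and l: "0 < l" and s: "5 \<le> s" "s + 2 * l \<le> 2 * m + 4"
    and square: "\<And>a. window_count m a s l = window_count m a (s + l) l"
  shows False
proof -
  consider "s + l = m + 5" | "s + l < m + 5" | "m + 5 < s + l"
    by linarith
  then show False
  proof cases
    case 1
    then show False
      using square[of "m + 3"] positions_simps(5)[OF m] l s
      by (simp add: window_count_def split: if_split_asm)
  next
    case 2
    define a where "a = s + l - 2"
    have a: "4 \<le> a" "a \<le> m + 2"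
      using 2 s l by (auto simp: a_def)
    show False
      using square[of a] positions_simps(6)[OF a] a_def l s 2
      by (simp add: window_count_def split: if_split_asm)
  next
    case 3
    define a where "a = s + l - 2 - m"
    have a: "4 \<le> a" "a \<le> m + 2"
      using 3 s l by (auto simp: a_def)
    show False
      using square[of a] positions_simps(6)[OF a] a_def l s 3
      by (simp add: window_count_def split: if_split_asm)
  qed
qed

lemma window_square_free_last_block:
  assumes m: "m \<ge> 2" and l: "0 < l" and s: "2 * m + 9 \<le> s" "s + 2 * l \<le> 4 * m + 7"
    and square: "\<And>a. window_count m a s l = window_count m a (s + l) l"
  shows False
proof -
  consider "s = 2 * m + 9" | "s = 2 * m + 10"
    | a where "s = 2 * m + 1 + 2 * a" "5 \<le> a" "a \<le> m + 2"
    | a where "s = 2 * m + 4 + 2 * a" "4 \<le> a" "a \<le> m + 2"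
  proof -
    have "s = 2 * m + 9 \<or> s = 2 * m + 10 \<or> (\<exists>a. s = 2 * m + 1 + 2 * a \<and> 5 \<le> a \<and> a \<le> m + 2)
        \<or> (\<exists>a. s = 2 * m + 4 + 2 * a \<and> 4 \<le> a \<and> a \<le> m + 2)"
      using s l by presburger
    then show thesis
      using that by blast
  qed
  then show False
  proof cases
    case 1
    have four: "4 \<le> (4::nat)" "4 \<le> m + 2"
      using m by auto
    show False
    proof (cases "l = 2 \<or> l = 3")
      case True
      then show False
        using square[of "m + 3"] positions_simps(5)[OF m] 1
        by (auto simp: window_count_def split: if_split_asm)
    next
      case False
      then show False
        using square[of 4] positions_simps(6)[OF four] 1 l
        by (simp add: window_count_def split: if_split_asm)
    qed
  next
    case 2
    then show False
      using square[of "m + 3"] positions_simps(5)[OF m] l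
      by (simp add: window_count_def split: if_split_asm)
  next
    case (3 a)
    show False
    proof (cases "l = 2 \<or> l = 3")
      case True
      have a: "4 \<le> a - 1" "a - 1 \<le> m + 2"
        using 3 by auto
      have shift: "a - 1 + 1 = a" "a - 1 + 1 + m = a + m"
        "2 * m + 1 + 2 * (a - 1) = s - 2" "2 * m + 4 + 2 * (a - 1) = s + 1"
        using 3 by arith+
      have "positions m (a - 1) = [a, a + m, s - 2, s + 1]"
        using positions_simps(6)[OF a] unfolding shift .
      then show False
        using square[of "a - 1"] 3 True by (auto simp: window_count_def split: if_split_asm)
    next
      case False
      have a: "4 \<le> a" "a \<le> m + 2"
        using 3 by auto
      show False
        using square[of a] positions_simps(6)[OF a] 3 False l
        by (simp add: window_count_def split: if_split_asm)
    qed
  next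
    case (4 a)
    have a: "4 \<le> a" "a \<le> m + 2"
      using 4 by auto
    show False
      using square[of a] positions_simps(6)[OF a] 4 l
      by (simp add: window_count_def split: if_split_asm)
  qed
qed

text \<open>Balancing the rare letters \<open>m + 4\<close> (once) and \<open>3\<close> (twice) between the two halves confines
  a square to one of the two blocks above, or to a few placements that the counts of \<open>1\<close>, \<open>2\<close>
  and \<open>m + 3\<close> rule out.\<close>

lemma window_square_free:
  assumes m: "m \<ge> 2" and l: "0 < l" and s: "s + 2 * l \<le> 4 * m + 9"
    and square: "\<And>a. window_count m a s l = window_count m a (s + l) l"
  shows False
proof -
  note count_1 = square[of 1, unfolded window_count_def positions_simps(1)]
  note count_2 = square[of 2, unfolded window_count_def positions_simps(2)]
  have below_top: "s + 2 * l \<le> 4 * m + 7"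
    using square[of "m + 4"] s l unfolding window_count_def positions_simps(4)
    by (simp split: if_split_asm; arith)
  have "(s \<le> 3 \<and> 3 < s + l \<and> s + l \<le> 2 * m + 7 \<and> 2 * m + 7 < s + 2 * l) \<or> s + 2 * l \<le> 3
      \<or> (4 \<le> s \<and> s + 2 * l \<le> 2 * m + 7) \<or> 2 * m + 8 \<le> s"
    using square[of 3] l unfolding window_count_def positions_simps(3)
    by (simp split: if_split_asm; arith)
  then show False
  proof (elim disjE)
    assume "s + 2 * l \<le> 3"
    then show False
      using count_1 l by (simp split: if_split_asm; arith)
  next
    assume h: "4 \<le> s \<and> s + 2 * l \<le> 2 * m + 7"
    have first: "s + 2 * l \<le> 2 * m + 4"
    proof (rule ccontr)
      assume "\<not> ?thesis"
      then have "s + l = 2 * m + 5 \<or> s + l = 2 * m + 6"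
        using count_1 h l by (simp split: if_split_asm; arith)
      then have "(s = 2 * m + 4 \<and> l = 1) \<or> (s = 2 * m + 3 \<and> l = 2) \<or> (s = 2 * m + 5 \<and> l = 1)"
        using h \<open>\<not> s + 2 * l \<le> 2 * m + 4\<close> l by arith
      then show False
        using count_2 m by (elim disjE; simp split: if_split_asm)
    qed
    moreover have "s \<noteq> 4"
    proof
      assume "s = 4"
      then show False
        using count_2 first l by (simp split: if_split_asm; arith)
    qed
    ultimately show False
      using window_square_free_first_block[OF m l _ _ square] h by simp
  next
    assume h: "2 * m + 8 \<le> s"
    have "s \<noteq> 2 * m + 8"
    proof
      assume "s = 2 * m + 8"
      then show False
        using count_2 l by (simp split: if_split_asm; arith)
    qed
    then show False
      using window_square_free_last_block[OF m l _ below_top square] h by simp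
  next
    assume h: "s \<le> 3 \<and> 3 < s + l \<and> s + l \<le> 2 * m + 7 \<and> 2 * m + 7 < s + 2 * l"
    have long: "m + 5 \<le> s + l \<and> 2 * m + 11 \<le> s + 2 * l"
      using square[of "m + 3"] h unfolding window_count_def positions_simps(5)[OF m]
      by (simp split: if_split_asm; arith)
    show False
    proof (cases "s + l \<le> 2 * m + 4")
      case True
      have s: "s = 0"
        using count_1 h long True by (simp split: if_split_asm; arith)
      define a where "a = l - m - 1"
      have a: "4 \<le> a" "a \<le> m + 2"
        using s long below_top by (auto simp: a_def)
      have shift: "a + 1 = l - m" "l - m + m = l"
        "2 * m + 1 + 2 * a = 2 * l - 1" "2 * m + 4 + 2 * a = 2 * l + 2"
        using s long below_top by (auto simp: a_def)
      have "positions m a = [l - m, l, 2 * l - 1, 2 * l + 2]"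
        using positions_simps(6)[OF a] unfolding shift .
      then show False
        using square[of a] s long unfolding window_count_def by (simp split: if_split_asm; arith)
    next
      case False
      then have "s = 3 \<and> s + l = 2 * m + 5"
        using count_1 h long below_top by (simp split: if_split_asm; arith)
      then have "s = 3" "l = 2 * m + 2"
        by arith+
      then show False
        using count_2 m by (simp split: if_split_asm)
    qed
  qed
qed

definition completion_half :: "nat \<Rightarrow> nat \<Rightarrow> nat" where
  "completion_half m a =
    (if a \<le> 3 then a else if a = m + 3 then m + 5 else if a = m + 4 then 2 * m + 5 else m + 2 + a)"

lemma window_count_completion:
  assumes "m \<ge> 2" and "a \<in> alphabet (m + 4)"
  shows "(if b = a then 1 else 0) + window_count m b 0 (completion_half m a - 1)
    = window_count m b (completion_half m a - 1) (completion_half m a)"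
proof -
  have a: "1 \<le> a" "a \<le> m + 4"
    using assms(2) by (auto simp: alphabet_def)
  then have "a \<le> 3 \<or> a = m + 3 \<or> a = m + 4 \<or> (4 \<le> a \<and> a \<le> m + 2)"
    by linarith
  then show ?thesis
    using assms(1) a
    by (cases rule: positions_cases[OF assms(1), of b]; elim disjE;
        simp add: window_count_def completion_half_def; arith)
qed

lemma crucial_short_crucial_rev:
  assumes m: "m \<ge> 2"
  shows "crucial (alphabet (m + 4)) (S2 (m + 4)) (rev (short_crucial_rev m))"
  unfolding crucial_S2_rev_iff
proof (intro conjI allI ballI notI)
  show "set (short_crucial_rev m) \<subseteq> alphabet (m + 4)"
    using set_short_crucial_rev[OF m] .
next
  fix s k assume sq: "abelian_square_prefix (drop s (short_crucial_rev m)) k"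
  then have k: "0 < k" "s + 2 * k \<le> 4 * m + 9"
    by (auto simp: abelian_square_prefix_def length_short_crucial_rev)
  have "count_list (take k (drop s (short_crucial_rev m))) a
      = count_list (take k (drop (s + k) (short_crucial_rev m))) a" for a
    using sq by (simp add: abelian_square_prefix_def add.commute)
  then have "window_count m a s k = window_count m a (s + k) k" for a
    using count_list_window[OF m] k by simp
  then show False
    using window_square_free[OF m k] by simp
next
  fix a assume a: "a \<in> alphabet (m + 4)"
  define k where "k = completion_half m a"
  have k: "1 \<le> k" "k \<le> 2 * m + 5"
    using a m by (auto simp: k_def completion_half_def alphabet_def)
  have "count_list (take k (a # short_crucial_rev m)) b
      = count_list (take k (drop k (a # short_crucial_rev m))) b" for b
  proof -
    have "take k (a # short_crucial_rev m) = a # take (k - 1) (short_crucial_rev m)"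
      and "drop k (a # short_crucial_rev m) = drop (k - 1) (short_crucial_rev m)"
      using k(1) by (simp_all add: take_Cons' drop_Cons')
    moreover have "count_list (take (k - 1) (short_crucial_rev m)) b = window_count m b 0 (k - 1)"
      using count_list_window[OF m, of 0 "k - 1" b] k by simp
    moreover have "count_list (take k (drop (k - 1) (short_crucial_rev m))) b
        = window_count m b (k - 1) k"
      using count_list_window[OF m, of "k - 1" k b] k by simp
    ultimately show ?thesis
      using window_count_completion[OF m a, of b, folded k_def] by auto
  qed
  then show "\<exists>k. abelian_square_prefix (a # short_crucial_rev m) k"
    using k by (auto simp: abelian_square_prefix_def length_short_crucial_rev intro!: exI[of _ k])
qed

lemma short_crucial_word_exists:
  assumes "n \<ge> 3"
  shows "\<exists>V. crucial (alphabet n) (S2 n) V \<and> length V + 7 = 4 * n"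
proof -
  consider "n = 3" | "n = 4" | "n = 5" | "n \<ge> 6"
    using assms by linarith
  then show ?thesis
  proof cases
    case 1
    have "crucial (alphabet 3) (S2 3) (rev [3, 1, 3, 2, 1])"
      unfolding crucial_S2_rev_iff_bounded abelian_square_prefix_code by code_simp
    then show ?thesis
      using 1 by force
  next
    case 2
    have "crucial (alphabet 4) (S2 4) (rev [4, 1, 3, 1, 4, 1, 3, 2, 1])"
      unfolding crucial_S2_rev_iff_bounded abelian_square_prefix_code by code_simp
    then show ?thesis
      using 2 by force
  next
    case 3
    have "crucial (alphabet 5) (S2 5) (rev [4, 5, 4, 1, 3, 1, 4, 5, 4, 1, 3, 2, 1])"
      unfolding crucial_S2_rev_iff_bounded abelian_square_prefix_code by code_simp
    then show ?thesis
      using 3 by force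
  next
    case 4
    define m where "m = n - 4"
    have m: "m \<ge> 2" "n = m + 4"
      using 4 by (simp_all add: m_def)
    show ?thesis
      using crucial_short_crucial_rev[OF m(1)] length_short_crucial_rev[of m] m(2)
      by (intro exI[of _ "rev (short_crucial_rev m)"]) simp
  qed
qed

theorem proposition1:
  fixes n :: nat and W :: "nat list"
  assumes "n \<ge> 1"
    and "minimal_crucial (alphabet n) (S2 n) W"
  shows "\<not> (\<exists>a b c. a \<in> alphabet n \<and> b \<in> alphabet n \<and> c \<in> alphabet n \<and>
              a \<noteq> b \<and> a \<noteq> c \<and> b \<noteq> c \<and>
              nu a W = 2 \<and> nu b W = 2 \<and> nu c W = 2)"
proof
  assume "\<exists>a b c. a \<in> alphabet n \<and> b \<in> alphabet n \<and> c \<in> alphabet n \<and>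
              a \<noteq> b \<and> a \<noteq> c \<and> b \<noteq> c \<and>
              nu a W = 2 \<and> nu b W = 2 \<and> nu c W = 2"
  then obtain a b c where abc: "a \<in> alphabet n" "b \<in> alphabet n" "c \<in> alphabet n"
      "a \<noteq> b" "a \<noteq> c" "b \<noteq> c"
    and twice: "count_list W a = 2" "count_list W b = 2" "count_list W c = 2"
    by (auto simp: nu_def)
  have crucial: "crucial (alphabet n) (S2 n) W"
    using assms(2) by (simp add: minimal_crucial_def)
  have "3 \<le> n"
    using card_mono[of "alphabet n" "{a, b, c}"] abc by (simp add: alphabet_def)
  then obtain V where V: "crucial (alphabet n) (S2 n) V" "length V + 7 = 4 * n"
    using short_crucial_word_exists by blast
  have "length W \<le> length V"
    using assms(2) V(1) by (simp add: minimal_crucial_def)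
  moreover have "4 * n \<le> length W + 6"
    using crucial_S2_length_lower_bound[OF crucial abc twice] .
  ultimately show False
    using V(2) by linarith
qed

end
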